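(* Let $X$ be a random variable in $[0,1]$ with mean $\mu\in(0,1)$ and variance $\sigma^2$, and let $g(\mu)=\max\{\mu,1-\mu\}$. Then \[ \mathbb{E}[\psi_E(|X-\mu|)]\le\sigma^2\,\frac{\psi_E(g(\mu))}{g(\mu)^2}. \] Moreover, this constant is sharp: for each $\mu\in(0,1)$, \[ \sup\left\{\frac{\mathbb{E}[\psi_E(|X-\mu|)]}{\operatorname{Var}(X)}\right\}=\frac{\psi_E(g(\mu))}{g(\mu)^2}, \] where the supremum is over all non-degenerate random variables $X\in[0,1]$ with $\mathbb{E}X=\mu$.
   Context: $\psi_E(x)=-\log(1-x)-x$ for $x\in[0,1)$. *)

theory Defs
  imports "HOL-Probability.Probability"
begin

definition psiE :: "real \<Rightarrow> real" where
  "psiE x = - ln (1 - x) - x"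

definition gmu :: "real \<Rightarrow> real" where
  "gmu \<mu> = max \<mu> (1 - \<mu>)"

end

theory Submission
  imports Defs
begin

text \<open>
  Since \<open>2 psiE t \<le> t\<^sup>2 / (1 - t)\<close>, the ratio \<open>psiE t / t\<^sup>2\<close> is nondecreasing on \<open>(0, 1)\<close>.
  As \<open>\<bar>X - \<mu>\<bar> \<le> g = gmu \<mu>\<close>, this gives \<open>psiE \<bar>X - \<mu>\<bar> \<le> (X - \<mu>)\<^sup>2 psiE g / g\<^sup>2\<close>
  pointwise, and the bound follows by taking expectations. For sharpness, put mass
  \<open>d / (g + d)\<close> on the endpoint of \<open>[0, 1]\<close> at distance \<open>g\<close> from \<open>\<mu>\<close> and the remaining mass
  at distance \<open>d\<close> on the other side: this has mean \<open>\<mu>\<close>, variance \<open>g d\<close>, and ratio at least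
  \<open>psiE g / (g (g + d))\<close>, which tends to \<open>psiE g / g\<^sup>2\<close> as \<open>d \<rightarrow> 0\<close>.
\<close>

lemma psiE_has_real_derivative:
  fixes t :: real assumes "t < 1"
  shows "(psiE has_real_derivative t / (1 - t)) (at t)"
  unfolding psiE_def[abs_def] using assms
  by (auto intro!: derivative_eq_intros simp: field_simps)

lemma psiE_nonneg:
  fixes t :: real assumes "t < 1" shows "0 \<le> psiE t"
  using ln_le_minus_one[of "1 - t"] assms unfolding psiE_def by auto

lemma two_psiE_le:
  fixes t :: real assumes "0 \<le> t" "t < 1"
  shows "2 * psiE t \<le> t\<^sup>2 / (1 - t)"
proof -
  let ?h = "\<lambda>x::real. x\<^sup>2 / (1 - x) - 2 * psiE x"
  have "?h 0 \<le> ?h t"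
  proof (rule DERIV_nonneg_imp_nondecreasing[OF assms(1)])
    fix x :: real assume "0 \<le> x" "x \<le> t"
    then have x: "x < 1" using assms by auto
    have "(?h has_real_derivative (2 * x * (1 - x) + x\<^sup>2) / (1 - x)\<^sup>2 - 2 * (x / (1 - x))) (at x)"
      using x by (auto intro!: derivative_eq_intros psiE_has_real_derivative
                       simp: power2_eq_square)
    moreover have "(2 * x * (1 - x) + x\<^sup>2) / (1 - x)\<^sup>2 - 2 * (x / (1 - x)) = (x / (1 - x))\<^sup>2"
      using x by (simp add: divide_simps) (simp add: algebra_simps power2_eq_square)
    ultimately show "\<exists>y. (?h has_real_derivative y) (at x) \<and> 0 \<le> y"
      by auto
  qed
  then show ?thesis by (simp add: psiE_def)
qed

lemma psiE_div_square_mono: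
  fixes s t :: real assumes "0 < s" "s \<le> t" "t < 1"
  shows "psiE s / s\<^sup>2 \<le> psiE t / t\<^sup>2"
proof (rule DERIV_nonneg_imp_nondecreasing[OF assms(2)])
  fix x :: real assume "s \<le> x" "x \<le> t"
  then have x: "0 < x" "x < 1" using assms by auto
  have "((\<lambda>x. psiE x / x\<^sup>2) has_real_derivative
          (x / (1 - x) * x\<^sup>2 - psiE x * (2 * x)) / (x\<^sup>2)\<^sup>2) (at x)"
    using x by (auto intro!: derivative_eq_intros psiE_has_real_derivative
                     simp: power2_eq_square)
  moreover have "(x / (1 - x) * x\<^sup>2 - psiE x * (2 * x)) / (x\<^sup>2)\<^sup>2
                 = (x\<^sup>2 / (1 - x) - 2 * psiE x) / x ^ 3"
    using x by (simp add: field_simps power2_eq_square power3_eq_cube)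
  moreover have "0 \<le> (x\<^sup>2 / (1 - x) - 2 * psiE x) / x ^ 3"
    using two_psiE_le[of x] x by simp
  ultimately show "\<exists>y. ((\<lambda>x. psiE x / x\<^sup>2) has_real_derivative y) (at x) \<and> 0 \<le> y"
    by metis
qed

lemma psiE_le_square_mult:
  fixes s t :: real assumes "0 \<le> s" "s \<le> t" "t < 1"
  shows "psiE s \<le> s\<^sup>2 * (psiE t / t\<^sup>2)"
proof (cases "s = 0")
  case True
  then show ?thesis by (simp add: psiE_def)
next
  case False
  then have "psiE s / s\<^sup>2 \<le> psiE t / t\<^sup>2"
    using psiE_div_square_mono assms by auto
  with False show ?thesis by (simp add: field_simps)
qed

lemma (in prob_space) expectation_psiE_le_variance:
  fixes X :: "'a \<Rightarrow> real" and t :: real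
  assumes X: "X \<in> borel_measurable M"
    and bounded: "AE x in M. \<bar>X x - expectation X\<bar> \<le> t" and "t < 1"
  shows "expectation (\<lambda>x. psiE \<bar>X x - expectation X\<bar>) \<le> variance X * (psiE t / t\<^sup>2)"
proof -
  define c where "c = psiE t / t\<^sup>2"
  have "0 \<le> c" unfolding c_def using psiE_nonneg \<open>t < 1\<close> by simp
  have psiE_le: "AE x in M. psiE \<bar>X x - expectation X\<bar> \<le> (X x - expectation X)\<^sup>2 * c"
    using bounded
  proof eventually_elim
    case (elim x)
    then show ?case
      using psiE_le_square_mult[of "\<bar>X x - expectation X\<bar>" t] \<open>t < 1\<close> by (simp add: c_def)
  qed
  have square_le: "AE x in M. (X x - expectation X)\<^sup>2 \<le> t\<^sup>2"
    using bounded by eventually_elim (metis abs_ge_zero power2_abs power_mono)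
  have "integrable M (\<lambda>x. (X x - expectation X)\<^sup>2)"
    by (rule integrable_const_bound[where B = "t\<^sup>2"]) (use square_le X in auto)
  moreover have "integrable M (\<lambda>x. psiE \<bar>X x - expectation X\<bar>)"
  proof (rule integrable_const_bound[where B = "t\<^sup>2 * c"])
    show "AE x in M. norm (psiE \<bar>X x - expectation X\<bar>) \<le> t\<^sup>2 * c"
      using psiE_le square_le bounded
    proof eventually_elim
      case (elim x)
      then have "0 \<le> psiE \<bar>X x - expectation X\<bar>" using psiE_nonneg \<open>t < 1\<close> by simp
      moreover have "(X x - expectation X)\<^sup>2 * c \<le> t\<^sup>2 * c"
        using elim \<open>0 \<le> c\<close> by (intro mult_right_mono) auto
      ultimately show ?case using elim by simp
    qed
    show "(\<lambda>x. psiE \<bar>X x - expectation X\<bar>) \<in> borel_measurable M"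
      unfolding psiE_def using X by measurable
  qed
  ultimately have "expectation (\<lambda>x. psiE \<bar>X x - expectation X\<bar>)
                   \<le> expectation (\<lambda>x. (X x - expectation X)\<^sup>2 * c)"
    using psiE_le by (intro integral_mono_AE) auto
  then show ?thesis by (simp add: c_def)
qed

lemma (in prob_space) expectation_psiE_le_variance_unit_interval:
  fixes X :: "'a \<Rightarrow> real" and \<mu> :: real
  assumes "X \<in> borel_measurable M" and "AE x in M. X x \<in> {0..1}"
    and "expectation X = \<mu>" and "0 < \<mu>" "\<mu> < 1"
  shows "expectation (\<lambda>x. psiE \<bar>X x - \<mu>\<bar>) \<le> variance X * (psiE (gmu \<mu>) / (gmu \<mu>)\<^sup>2)"
proof -
  have "AE x in M. \<bar>X x - expectation X\<bar> \<le> gmu \<mu>"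
    using assms(2) by eventually_elim (auto simp: assms(3) gmu_def)
  moreover have "gmu \<mu> < 1" using assms by (simp add: gmu_def)
  ultimately show ?thesis
    using expectation_psiE_le_variance[OF assms(1)] unfolding assms(3) by blast
qed

lemma integral_two_point_pmf:
  fixes g d :: real and f :: "real \<Rightarrow> real" assumes "0 < g" "0 < d"
  shows "integral\<^sup>L (measure_pmf (map_pmf (\<lambda>b. if b then g else - d) (bernoulli_pmf (d / (g + d))))) f
         = (d * f g + g * f (- d)) / (g + d)"
proof -
  have "0 \<le> d / (g + d)" "d / (g + d) \<le> 1" "1 - d / (g + d) = g / (g + d)"
    using assms by (simp_all add: field_simps)
  then show ?thesis by (simp add: add_divide_distrib mult.commute)
qed

definition psiE_variance_ratios :: "real \<Rightarrow> real set" where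
  "psiE_variance_ratios \<nu> =
     { prob_space.expectation N (\<lambda>x. psiE \<bar>Y x - \<nu>\<bar>) / prob_space.variance N Y
       | (N :: real measure) (Y :: real \<Rightarrow> real).
         prob_space N \<and> Y \<in> borel_measurable N \<and>
         (AE x in N. Y x \<in> {0..1}) \<and>
         prob_space.expectation N Y = \<nu> \<and>
         prob_space.variance N Y > 0 }"

lemma psiE_variance_ratiosI:
  fixes N :: "real measure" and Y :: "real \<Rightarrow> real"
  assumes "prob_space N" "Y \<in> borel_measurable N" "AE x in N. Y x \<in> {0..1}"
    "prob_space.expectation N Y = \<nu>" "prob_space.variance N Y > 0"
  shows "prob_space.expectation N (\<lambda>x. psiE \<bar>Y x - \<nu>\<bar>) / prob_space.variance N Y
         \<in> psiE_variance_ratios \<nu>"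
  using assms unfolding psiE_variance_ratios_def by blast

lemma psiE_variance_ratios_le:
  fixes \<nu> z :: real
  assumes "0 < \<nu>" "\<nu> < 1" "z \<in> psiE_variance_ratios \<nu>"
  shows "z \<le> psiE (gmu \<nu>) / (gmu \<nu>)\<^sup>2"
proof -
  obtain N :: "real measure" and Y where N: "prob_space N" "Y \<in> borel_measurable N"
    "AE x in N. Y x \<in> {0..1}" "prob_space.expectation N Y = \<nu>" "prob_space.variance N Y > 0"
    and z: "z = prob_space.expectation N (\<lambda>x. psiE \<bar>Y x - \<nu>\<bar>) / prob_space.variance N Y"
    using assms(3) unfolding psiE_variance_ratios_def by blast
  have "prob_space.expectation N (\<lambda>x. psiE \<bar>Y x - \<nu>\<bar>)
        \<le> prob_space.variance N Y * (psiE (gmu \<nu>) / (gmu \<nu>)\<^sup>2)"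
    using prob_space.expectation_psiE_le_variance_unit_interval[OF N(1-4) assms(1,2)] .
  with N(5) show ?thesis by (simp add: z pos_divide_le_eq mult.commute)
qed

lemma psiE_variance_ratios_witness:
  fixes \<nu> d :: real
  assumes "0 < \<nu>" "\<nu> < 1" "0 < d" "d \<le> 1 - gmu \<nu>"
  shows "\<exists>z\<in>psiE_variance_ratios \<nu>. psiE (gmu \<nu>) / (gmu \<nu> * (gmu \<nu> + d)) \<le> z"
proof -
  define g where "g = gmu \<nu>"
  define s :: real where "s = (if \<nu> \<le> 1/2 then 1 else -1)"
  define q where "q = map_pmf (\<lambda>b. if b then g else - d) (bernoulli_pmf (d / (g + d)))"
  define Y where "Y z = \<nu> + s * z" for z
  have "0 < g" "g < 1" using assms by (auto simp: g_def gmu_def)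
  have integral_q: "\<And>f. integral\<^sup>L q f = (d * f g + g * f (- d)) / (g + d)"
    unfolding q_def using \<open>0 < g\<close> \<open>0 < d\<close> by (rule integral_two_point_pmf)
  have s: "\<bar>s\<bar> = 1" by (simp add: s_def)
  have range: "AE z in q. Y z \<in> {0..1}"
    using assms \<open>0 < g\<close> \<open>0 < d\<close>
    by (auto simp: q_def Y_def s_def g_def gmu_def AE_measure_pmf_iff)
  have mean: "measure_pmf.expectation q Y = \<nu>"
    using \<open>0 < g\<close> \<open>0 < d\<close> by (simp add: integral_q Y_def field_simps)
  have variance: "measure_pmf.variance q Y = g * d"
  proof -
    have "\<And>z. (s * z)\<^sup>2 = z\<^sup>2" using s by (metis abs_mult abs_one power2_abs mult_1)
    then have "measure_pmf.variance q Y = (d * g\<^sup>2 + g * d\<^sup>2) / (g + d)"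
      unfolding mean by (simp add: integral_q Y_def)
    also have "\<dots> = g * d"
      using \<open>0 < g\<close> \<open>0 < d\<close> by (simp add: field_simps power2_eq_square)
    finally show ?thesis .
  qed
  have psiE_mean: "measure_pmf.expectation q (\<lambda>z. psiE \<bar>Y z - \<nu>\<bar>)
                   = (d * psiE g + g * psiE d) / (g + d)"
    using s \<open>0 < g\<close> \<open>0 < d\<close> by (simp add: integral_q Y_def abs_mult)
  have ratio: "measure_pmf.expectation q (\<lambda>z. psiE \<bar>Y z - \<nu>\<bar>) / measure_pmf.variance q Y
               = psiE g / (g * (g + d)) + psiE d / (d * (g + d))"
    using \<open>0 < g\<close> \<open>0 < d\<close> by (simp add: psiE_mean variance divide_simps)
  have "0 \<le> psiE d / (d * (g + d))"
    using psiE_nonneg[of d] assms \<open>0 < g\<close> \<open>0 < d\<close> by (simp add: g_def)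
  then have "psiE g / (g * (g + d))
             \<le> measure_pmf.expectation q (\<lambda>z. psiE \<bar>Y z - \<nu>\<bar>) / measure_pmf.variance q Y"
    unfolding ratio by linarith
  moreover have "measure_pmf.expectation q (\<lambda>z. psiE \<bar>Y z - \<nu>\<bar>) / measure_pmf.variance q Y
                 \<in> psiE_variance_ratios \<nu>"
    using range mean variance \<open>0 < g\<close> \<open>0 < d\<close>
    by (intro psiE_variance_ratiosI) (simp_all add: prob_space_measure_pmf)
  ultimately show ?thesis unfolding g_def by blast
qed

lemma Sup_psiE_variance_ratios:
  fixes \<nu> :: real assumes "0 < \<nu>" "\<nu> < 1"
  shows "Sup (psiE_variance_ratios \<nu>) = psiE (gmu \<nu>) / (gmu \<nu>)\<^sup>2"
proof (rule cSup_eq_non_empty)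
  define g where "g = gmu \<nu>"
  have "0 < g" "g < 1" using assms by (auto simp: g_def gmu_def)
  show "psiE_variance_ratios \<nu> \<noteq> {}"
    using psiE_variance_ratios_witness[OF assms, of "1 - g"] \<open>g < 1\<close> by (auto simp: g_def)
  show "z \<le> psiE (gmu \<nu>) / (gmu \<nu>)\<^sup>2" if "z \<in> psiE_variance_ratios \<nu>" for z
    using psiE_variance_ratios_le[OF assms that] .
  show "psiE (gmu \<nu>) / (gmu \<nu>)\<^sup>2 \<le> y" if upper: "\<And>z. z \<in> psiE_variance_ratios \<nu> \<Longrightarrow> z \<le> y" for y
  proof (rule tendsto_upperbound)
    show "((\<lambda>d. psiE g / (g * (g + d))) \<longlongrightarrow> psiE (gmu \<nu>) / (gmu \<nu>)\<^sup>2) (at_right 0)"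
      using \<open>0 < g\<close> by (auto intro!: tendsto_eq_intros simp: g_def power2_eq_square)
    have "psiE g / (g * (g + d)) \<le> y" if "0 < d" "d < 1 - g" for d
      using psiE_variance_ratios_witness[OF assms \<open>0 < d\<close>] that upper
      by (force simp: g_def)
    then show "\<forall>\<^sub>F d in at_right 0. psiE g / (g * (g + d)) \<le> y"
      using \<open>g < 1\<close> unfolding eventually_at_right_field by (intro exI[of _ "1 - g"]) auto
  qed simp
qed

theorem mainTheorem17:
  fixes M :: "'a measure" and X :: "'a \<Rightarrow> real" and \<mu> :: real
  assumes "prob_space M"
    and "X \<in> borel_measurable M"
    and "AE x in M. X x \<in> {0..1}"
    and "prob_space.expectation M X = \<mu>"
    and "0 < \<mu>" and "\<mu> < 1"
  shows "prob_space.expectation M (\<lambda>x. psiE \<bar>X x - \<mu>\<bar>)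
           \<le> prob_space.variance M X * (psiE (gmu \<mu>) / (gmu \<mu>)\<^sup>2)
         \<and> (\<forall>\<nu>::real. 0 < \<nu> \<and> \<nu> < 1 \<longrightarrow>
              Sup { prob_space.expectation N (\<lambda>x. psiE \<bar>Y x - \<nu>\<bar>) / prob_space.variance N Y
                   | (N :: real measure) (Y :: real \<Rightarrow> real).
                     prob_space N \<and> Y \<in> borel_measurable N \<and>
                     (AE x in N. Y x \<in> {0..1}) \<and>
                     prob_space.expectation N Y = \<nu> \<and>
                     prob_space.variance N Y > 0 }
              = psiE (gmu \<nu>) / (gmu \<nu>)\<^sup>2)"
  using prob_space.expectation_psiE_le_variance_unit_interval[OF assms] Sup_psiE_variance_ratios
  unfolding psiE_variance_ratios_def by simp

end
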